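(* Let $\mathcal{Y}=\{y_1,\dots,y_{n+1}\}\subset\mathbb{R}^n$ be affinely independent, $y_0\in\mathbb{R}^n$, $L>0$, with notation as in the context. Define $M=\operatorname{diag}(\ell_+)\,Y_+P_-(Y_-P_-)^{-1}\in\mathbb{R}^{|\mathcal{I}_+|\times(|\mathcal{I}_-|-1)}$ and real numbers $\{\mu_{ij}\}_{i\in\mathcal{I}_+,\,j\in\mathcal{I}_-}$ by $\mu_{ij}=[M]_{i,\,(j-n-2+|\mathcal{I}_-|)}$ for $(i,j)\in\mathcal{I}_+\times(\mathcal{I}_-\setminus\{0\})$ and $\mu_{i0}=\ell_i-\sum_{j\in\mathcal{I}_-\setminus\{0\}}\mu_{ij}$ for $i\in\mathcal{I}_+$. Then $$\sum_{j\in\mathcal{I}_-}\mu_{ij}=\ell_i\ \ (i\in\mathcal{I}_+),\qquad \sum_{i\in\mathcal{I}_+}\mu_{ij}=-\ell_j\ \ (j\in\mathcal{I}_-),$$ $$(LI-H^\star)\sum_{j\in\mathcal{I}_-}\mu_{ij}y_j=(LI-H^\star)\ell_iy_i\ \ (i\in\mathcal{I}_+),\qquad (LI+H^\star)\sum_{i\in\mathcal{I}_+}\mu_{ij}y_i=-(LI+H^\star)\ell_jy_j\ \ (j\in\mathcal{I}_-).$$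
   Context: The barycentric coordinates of $y_0$ w.r.t. $\mathcal{Y}$ are the unique reals $\ell_1,\dots,\ell_{n+1}$ with $\sum_{i=1}^{n+1}\ell_i=1$, $\sum_{i=1}^{n+1}\ell_iy_i=y_0$; set $\ell_0=-1$. The points are ordered so that $\ell_1\ge\cdots\ge\ell_{n+1}$. Let $\mathcal{I}_+=\{i\in\{0,\dots,n+1\}:\ell_i>0\}=\{1,\dots,|\mathcal{I}_+|\}$, $\mathcal{I}_-=\{i\in\{0,\dots,n+1\}:\ell_i<0\}=\{0\}\cup\{n+3-|\mathcal{I}_-|,\dots,n+1\}$. Let $G=\sum_{i=0}^{n+1}\ell_iy_iy_i^T$, with eigendecomposition $G=P\Lambda P^T$ ($P$ orthogonal, $\Lambda$ diagonal); $G$ has $|\mathcal{I}_+|-1$ positive and $|\mathcal{I}_-|-1$ negative eigenvalues. Let $P_+$ (resp. $P_-$) be the $n\times(|\mathcal{I}_+|-1)$ (resp. $n\times(|\mathcal{I}_-|-1)$) matrix of columns of $P$ belonging to positive (resp. negative) eigenvalues, and $H^\star=L\,P\,\mathrm{sign}(\Lambda)P^T=L(P_+P_+^T-P_-P_-^T)$ (entrywise sign, $\mathrm{sign}(0)=0$). Let $Y\in\mathbb{R}^{(n+1)\times n}$ have $i$th row $(y_i-y_0)^T$; $Y_+$ consists of its first $|\mathcal{I}_+|$ rows and $Y_-$ of its last $|\mathcal{I}_-|-1$ rows. Let $\ell_+=(\ell_1,\dots,\ell_{|\mathcal{I}_+|})^T$. The matrix $Y_-P_-$ is invertible. *)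

theory Defs
  imports "Jordan_Normal_Form.Gauss_Jordan_Elimination"
begin

definition affinely_independent_pts :: "nat \<Rightarrow> (nat \<Rightarrow> real vec) \<Rightarrow> bool" where
  "affinely_independent_pts n y \<longleftrightarrow>
     (\<forall>c :: nat \<Rightarrow> real.
        (\<Sum>i=1..n+1. c i) = 0 \<and> finsum_vec TYPE(real) n (\<lambda>i. c i \<cdot>\<^sub>v y i) {1..n+1} = 0\<^sub>v n
        \<longrightarrow> (\<forall>i\<in>{1..n+1}. c i = 0))"

definition Iplus :: "nat \<Rightarrow> (nat \<Rightarrow> real) \<Rightarrow> nat set" where
  "Iplus n l = {i\<in>{0..n+1}. l i > 0}"

definition Iminus :: "nat \<Rightarrow> (nat \<Rightarrow> real) \<Rightarrow> nat set" where
  "Iminus n l = {i\<in>{0..n+1}. l i < 0}"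

definition Gmat :: "nat \<Rightarrow> (nat \<Rightarrow> real vec) \<Rightarrow> (nat \<Rightarrow> real) \<Rightarrow> real mat" where
  "Gmat n y l = mat n n (\<lambda>(a,b). \<Sum>i=0..n+1. l i * (y i $ a) * (y i $ b))"

definition Hstar :: "nat \<Rightarrow> real \<Rightarrow> real mat \<Rightarrow> real mat \<Rightarrow> real mat" where
  "Hstar n L P Lam = L \<cdot>\<^sub>m (P * map_mat sgn Lam * transpose_mat P)"

definition Ymat :: "nat \<Rightarrow> (nat \<Rightarrow> real vec) \<Rightarrow> real mat" where
  "Ymat n y = mat_of_rows n (map (\<lambda>i. y i - y 0) [1..<n+2])"

definition Yplus :: "nat \<Rightarrow> (nat \<Rightarrow> real vec) \<Rightarrow> (nat \<Rightarrow> real) \<Rightarrow> real mat" where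
  "Yplus n y l = mat_of_rows n (map (row (Ymat n y)) [0..<card (Iplus n l)])"

definition Yminus :: "nat \<Rightarrow> (nat \<Rightarrow> real vec) \<Rightarrow> (nat \<Rightarrow> real) \<Rightarrow> real mat" where
  "Yminus n y l = mat_of_rows n (map (row (Ymat n y)) [n + 2 - card (Iminus n l)..<n+1])"

definition Pplus :: "nat \<Rightarrow> real mat \<Rightarrow> real mat \<Rightarrow> real mat" where
  "Pplus n P Lam = mat_of_cols n (map (col P) (filter (\<lambda>k. Lam $$ (k,k) > 0) [0..<n]))"

definition Pminus :: "nat \<Rightarrow> real mat \<Rightarrow> real mat \<Rightarrow> real mat" where
  "Pminus n P Lam = mat_of_cols n (map (col P) (filter (\<lambda>k. Lam $$ (k,k) < 0) [0..<n]))"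

definition diag_lplus :: "nat \<Rightarrow> (nat \<Rightarrow> real) \<Rightarrow> real mat" where
  "diag_lplus n l = (let p = card (Iplus n l) in mat p p (\<lambda>(a,b). if a = b then l (a+1) else 0))"

definition Mmat :: "nat \<Rightarrow> (nat \<Rightarrow> real vec) \<Rightarrow> (nat \<Rightarrow> real) \<Rightarrow> real mat \<Rightarrow> real mat \<Rightarrow> real mat" where
  "Mmat n y l P Lam = diag_lplus n l * Yplus n y l * Pminus n P Lam
      * the (mat_inverse (Yminus n y l * Pminus n P Lam))"

(* mu_{ij} = [M]_{i, j-n-2+|I_-|} (1-based) for j in I_- - {0};
   mu_{i0} = l_i - sum_{j in I_- - {0}} mu_{ij}.  JNF matrices are 0-based. *)
definition mu :: "nat \<Rightarrow> (nat \<Rightarrow> real vec) \<Rightarrow> (nat \<Rightarrow> real) \<Rightarrow> real mat \<Rightarrow> real mat \<Rightarrow> nat \<Rightarrow> nat \<Rightarrow> real" where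
  "mu n y l P Lam i j =
     (let M = Mmat n y l P Lam; q = card (Iminus n l) in
      if j = 0 then l i - (\<Sum>k\<in>Iminus n l - {0}. M $$ (i - 1, k + q - (n + 3)))
      else M $$ (i - 1, j + q - (n + 3)))"

end

theory Submission
  imports Defs "Jordan_Normal_Form.Determinant"
begin

(* Write w_i = y_i - y_0. The barycentric identities turn the quadratic form of G into
   x^T G v = sum_{i=1}^{n+1} l_i (w_i . x) (w_i . v); hence, by affine independence, a null vector
   of G is orthogonal to every w_i with l_i <> 0, and eigenvectors for different eigenvalues are
   orthogonal for this form. Since L I - H* (resp. L I + H* ) vanishes on the eigenvectors with
   positive (resp. negative) eigenvalue, the two vector identities only have to be tested against
   null eigenvectors, which is trivial, and against negative (resp. positive) eigenvectors.
   By construction M (Y_- P_-) = diag(l_+) Y_+ P_-, which is the row identity tested against the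
   negative eigenvectors. For the columns, let g_i = phi(y_i) with phi affine and
   sum_i l_i (w_i . q) g_i = 0 for every negative eigenvector q. Splitting this sum over the signs
   of l gives g_+^T diag(l_+) Y_+ P_- = -(l_- g_-)^T Y_- P_-, and multiplying by (Y_- P_-)^-1
   yields g_+^T M = -(l_- g_-)^T. Constant phi gives the column sums, phi = (p . _) for a positive
   eigenvector p gives the identity for L I + H*. *)

lemma scalar_prod_finsum_vec:
  fixes v :: "'a :: comm_ring vec"
  assumes "finite I" "v \<in> carrier_vec n" "\<And>j. j \<in> I \<Longrightarrow> f j \<in> carrier_vec n"
  shows "v \<bullet> finsum_vec TYPE('a) n f I = (\<Sum>j\<in>I. v \<bullet> f j)"
proof -
  have f: "f \<in> I \<rightarrow> carrier_vec n" using assms(3) by auto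
  have "v \<bullet> finsum_vec TYPE('a) n f I = (\<Sum>a<n. v $ a * (\<Sum>j\<in>I. f j $ a))"
    using assms(2) finsum_vec_closed[OF f] index_finsum_vec[OF assms(1) _ f]
    by (auto simp: scalar_prod_def lessThan_atLeast0 intro!: sum.cong)
  also have "\<dots> = (\<Sum>j\<in>I. \<Sum>a<n. v $ a * f j $ a)"
    by (simp add: sum_distrib_left sum.swap[of _ I])
  also have "\<dots> = (\<Sum>j\<in>I. v \<bullet> f j)"
    using assms(3)[THEN carrier_vecD] by (auto simp: scalar_prod_def lessThan_atLeast0 intro!: sum.cong)
  finally show ?thesis .
qed

lemma smult_mat_mult_vec:
  fixes A :: "'a :: comm_ring mat"
  assumes "A \<in> carrier_mat nr nc" "x \<in> carrier_vec nc"
  shows "(c \<cdot>\<^sub>m A) *\<^sub>v x = c \<cdot>\<^sub>v (A *\<^sub>v x)"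
  using assms by (intro eq_vecI) auto

lemma index_mult_mat_sum:
  fixes A B :: "'a :: semiring_0 mat"
  assumes "A \<in> carrier_mat nr m" "B \<in> carrier_mat m nc" "i < nr" "j < nc"
  shows "(A * B) $$ (i, j) = (\<Sum>c<m. A $$ (i, c) * B $$ (c, j))"
  using assms by (auto simp: scalar_prod_def lessThan_atLeast0 intro!: sum.cong)

lemma mult_mat_vec_eq_if_diff_zero:
  fixes A :: "'a :: ring mat"
  assumes "A \<in> carrier_mat nr nc" "u \<in> carrier_vec nc" "v \<in> carrier_vec nc"
    and "A *\<^sub>v (u - v) = 0\<^sub>v nr"
  shows "A *\<^sub>v u = A *\<^sub>v v"
proof (rule eq_vecI)
  fix a assume a: "a < dim_vec (A *\<^sub>v v)"
  moreover have "A *\<^sub>v u - A *\<^sub>v v = 0\<^sub>v nr"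
    using assms by (simp add: mult_minus_distrib_mat_vec[of _ nr nc])
  ultimately have "(A *\<^sub>v u - A *\<^sub>v v) $ a = 0" using assms(1) by simp
  then show "(A *\<^sub>v u) $ a = (A *\<^sub>v v) $ a" using a by simp
qed (use assms in simp)

lemma mult_mat_vec_eq_uminus_if_sum_zero:
  fixes A :: "'a :: ring mat"
  assumes "A \<in> carrier_mat nr nc" "u \<in> carrier_vec nc" "v \<in> carrier_vec nc"
    and "A *\<^sub>v (u + v) = 0\<^sub>v nr"
  shows "A *\<^sub>v u = - (A *\<^sub>v v)"
proof (rule eq_vecI)
  fix a assume a: "a < dim_vec (- (A *\<^sub>v v))"
  moreover have "A *\<^sub>v u + A *\<^sub>v v = 0\<^sub>v nr"
    using assms by (simp add: mult_add_distrib_mat_vec[of _ nr nc])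
  ultimately have "(A *\<^sub>v u + A *\<^sub>v v) $ a = 0" using assms(1) by simp
  then show "(A *\<^sub>v u) $ a = (- (A *\<^sub>v v)) $ a" using a by (simp add: eq_neg_iff_add_eq_0)
qed (use assms in simp)

lemma invertible_mat_the_mat_inverse:
  fixes A :: "'a :: field mat"
  assumes A: "A \<in> carrier_mat k k" and inv: "invertible_mat A"
  shows "A * the (mat_inverse A) = 1\<^sub>m k" "the (mat_inverse A) * A = 1\<^sub>m k"
    "the (mat_inverse A) \<in> carrier_mat k k"
proof -
  have "mat_inverse A \<noteq> None"
  proof
    assume "mat_inverse A = None"
    then have "A \<notin> Units (ring_mat TYPE('a) k ())" by (rule mat_inverse(1)[OF A])
    moreover obtain B where "A * B = 1\<^sub>m k" "B * A = 1\<^sub>m k" "B \<in> carrier_mat k k"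
      using inv A unfolding invertible_mat_def inverts_mat_def
      by (metis carrier_matD carrier_matI index_mult_mat(2,3) index_one_mat(2,3))
    ultimately show False using A by (auto simp: Units_def ring_mat_simps)
  qed
  then show "A * the (mat_inverse A) = 1\<^sub>m k" "the (mat_inverse A) * A = 1\<^sub>m k"
    "the (mat_inverse A) \<in> carrier_mat k k"
    using mat_inverse(2)[OF A] by auto
qed

lemma sum_mult_mat_right_inverse:
  fixes X B C :: "'a :: comm_ring_1 mat"
  assumes X: "X \<in> carrier_mat p m" and B: "B \<in> carrier_mat m m"
    and C: "C \<in> carrier_mat m m" "B * C = 1\<^sub>m m"
    and comb: "\<And>c. c < m \<Longrightarrow> (\<Sum>a<p. X $$ (a, c) * g a) = - (\<Sum>r<m. B $$ (r, c) * h r)"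
    and r: "r < m"
  shows "(\<Sum>a<p. (X * C) $$ (a, r) * g a) = - h r"
proof -
  have "(\<Sum>a<p. (X * C) $$ (a, r) * g a) = (\<Sum>a<p. \<Sum>c<m. X $$ (a, c) * g a * C $$ (c, r))"
    using X C r by (auto simp: index_mult_mat_sum[OF X C(1)] sum_distrib_left sum_distrib_right mult_ac
        simp del: index_mult_mat(1) intro!: sum.cong)
  also have "\<dots> = (\<Sum>c<m. (\<Sum>a<p. X $$ (a, c) * g a) * C $$ (c, r))"
    by (subst sum.swap) (simp add: sum_distrib_right)
  also have "\<dots> = - (\<Sum>c<m. (\<Sum>r'<m. B $$ (r', c) * h r') * C $$ (c, r))"
    by (simp add: comb sum_negf)
  also have "\<dots> = - (\<Sum>c<m. \<Sum>r'<m. h r' * (B $$ (r', c) * C $$ (c, r)))"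
    by (simp add: sum_distrib_left sum_distrib_right mult_ac)
  also have "\<dots> = - (\<Sum>r'<m. h r' * (B * C) $$ (r', r))"
    using B C(1) r by (subst sum.swap) (simp add: index_mult_mat_sum sum_distrib_left del: index_mult_mat(1))
  also have "\<dots> = - h r"
    using C r by (simp add: sum.delta' if_distrib[of "\<lambda>x. _ * x"] cong: if_cong)
  finally show ?thesis .
qed

lemma diagonal_mat_mult_vec_index:
  fixes D :: "'a :: semiring_0 mat"
  assumes "D \<in> carrier_mat n n" "diagonal_mat D" "z \<in> carrier_vec n" "k < n"
  shows "(D *\<^sub>v z) $ k = D $$ (k, k) * z $ k"
proof -
  have "(D *\<^sub>v z) $ k = (\<Sum>j\<in>{0..<n}. D $$ (k, j) * z $ j)"
    using assms by (auto simp: scalar_prod_def)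
  also have "\<dots> = D $$ (k, k) * z $ k"
    using assms by (subst sum.remove[of _ k]) (auto simp: diagonal_mat_def intro!: sum.neutral)
  finally show ?thesis .
qed

lemma diagonal_mat_mult_unit_vec:
  fixes D :: "'a :: semiring_1 mat"
  assumes "D \<in> carrier_mat n n" "diagonal_mat D" "k < n"
  shows "D *\<^sub>v unit_vec n k = D $$ (k, k) \<cdot>\<^sub>v unit_vec n k"
  using assms by (intro eq_vecI) (auto simp: diagonal_mat_def)

lemma orthogonal_mat_right_inverse:
  fixes P :: "'a :: field mat"
  assumes "P \<in> carrier_mat n n" "transpose_mat P * P = 1\<^sub>m n"
  shows "P * transpose_mat P = 1\<^sub>m n"
  using mat_mult_left_right_inverse[OF _ assms(1,2)] assms(1) by auto

lemma orthogonal_mat_col_scalar_prod: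
  fixes P :: "'a :: comm_ring_1 mat"
  assumes "P \<in> carrier_mat n n" "transpose_mat P * P = 1\<^sub>m n" "i < n" "k < n"
  shows "col P i \<bullet> col P k = (if i = k then 1 else 0)"
proof -
  have "col P i \<bullet> col P k = (transpose_mat P * P) $$ (i, k)" using assms(1,3,4) by auto
  then show ?thesis using assms(2-4) by simp
qed

lemma spectral_mult_col:
  fixes P D :: "'a :: field mat"
  assumes P: "P \<in> carrier_mat n n" "transpose_mat P * P = 1\<^sub>m n"
    and D: "D \<in> carrier_mat n n" "diagonal_mat D" and k: "k < n"
  shows "(P * D * transpose_mat P) *\<^sub>v col P k = D $$ (k, k) \<cdot>\<^sub>v col P k"
proof -
  have "transpose_mat P *\<^sub>v col P k = unit_vec n k"
    using P k by (subst col_mult2[of _ n n, symmetric]) auto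
  moreover have "P *\<^sub>v unit_vec n k = col P k"
    using P k by (intro eq_vecI) auto
  ultimately show ?thesis
    using P D k by (simp add: assoc_mult_mat_vec[of _ n n _ n] diagonal_mat_mult_unit_vec mult_mat_vec[of _ n n])
qed

lemma spectral_sgn_mult_vec:
  fixes P D :: "real mat"
  assumes P: "P \<in> carrier_mat n n" "transpose_mat P * P = 1\<^sub>m n"
    and D: "D \<in> carrier_mat n n" "diagonal_mat D" and x: "x \<in> carrier_vec n"
    and orth: "\<And>k. k < n \<Longrightarrow> sgn (D $$ (k, k)) \<noteq> c \<Longrightarrow> col P k \<bullet> x = 0"
  shows "(P * map_mat sgn D * transpose_mat P) *\<^sub>v x = c \<cdot>\<^sub>v x"
proof -
  define z where "z = transpose_mat P *\<^sub>v x"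
  have z: "z \<in> carrier_vec n" "\<And>k. k < n \<Longrightarrow> z $ k = col P k \<bullet> x"
    using P x by (auto simp: z_def)
  have S: "map_mat sgn D \<in> carrier_mat n n" "diagonal_mat (map_mat sgn D)"
    using D by (auto simp: diagonal_mat_def)
  have "map_mat sgn D *\<^sub>v z = c \<cdot>\<^sub>v z"
  proof (rule eq_vecI)
    fix k assume "k < dim_vec (c \<cdot>\<^sub>v z)"
    then have k: "k < n" using z by simp
    then show "(map_mat sgn D *\<^sub>v z) $ k = (c \<cdot>\<^sub>v z) $ k"
      using diagonal_mat_mult_vec_index[OF S z(1) k] orth[OF k] z D by auto
  qed (use S z in simp)
  moreover have "P *\<^sub>v z = x"
    using P x orthogonal_mat_right_inverse[OF P] by (simp add: z_def assoc_mult_mat_vec[symmetric, of _ n n _ n])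
  moreover have "(P * map_mat sgn D * transpose_mat P) *\<^sub>v x = P *\<^sub>v (map_mat sgn D *\<^sub>v z)"
    using P S x unfolding z_def
    by (subst assoc_mult_mat_vec[of _ n n _ n]) (auto intro!: arg_cong[of _ _ "\<lambda>w. P *\<^sub>v w"])
  ultimately show ?thesis
    using P z by (simp add: mult_mat_vec[of _ n n])
qed

lemma Hstar_mult_vec:
  assumes P: "P \<in> carrier_mat n n" "transpose_mat P * P = 1\<^sub>m n"
    and Lam: "Lam \<in> carrier_mat n n" "diagonal_mat Lam" and x: "x \<in> carrier_vec n"
    and orth: "\<And>k. k < n \<Longrightarrow> sgn (Lam $$ (k, k)) \<noteq> c \<Longrightarrow> col P k \<bullet> x = 0"
  shows "Hstar n L P Lam *\<^sub>v x = (L * c) \<cdot>\<^sub>v x"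
proof -
  have "(P * map_mat sgn Lam * transpose_mat P) *\<^sub>v x = c \<cdot>\<^sub>v x"
    by (rule spectral_sgn_mult_vec[OF P Lam x orth])
  moreover have "P * map_mat sgn Lam * transpose_mat P \<in> carrier_mat n n" using P Lam by auto
  ultimately show ?thesis
    using x by (simp add: Hstar_def smult_mat_mult_vec[of _ n n] smult_smult_assoc)
qed

lemma Hstar_minus_eq:
  assumes P: "P \<in> carrier_mat n n" "transpose_mat P * P = 1\<^sub>m n"
    and Lam: "Lam \<in> carrier_mat n n" "diagonal_mat Lam"
    and u: "u \<in> carrier_vec n" and v: "v \<in> carrier_vec n"
    and orth: "\<And>k. k < n \<Longrightarrow> \<not> 0 < Lam $$ (k, k) \<Longrightarrow> col P k \<bullet> (u - v) = 0"
  shows "(L \<cdot>\<^sub>m 1\<^sub>m n - Hstar n L P Lam) *\<^sub>v u = (L \<cdot>\<^sub>m 1\<^sub>m n - Hstar n L P Lam) *\<^sub>v v"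
proof (rule mult_mat_vec_eq_if_diff_zero[OF _ u v])
  have "Hstar n L P Lam *\<^sub>v (u - v) = (L * 1) \<cdot>\<^sub>v (u - v)"
    by (rule Hstar_mult_vec[OF P Lam]) (use u v orth in \<open>auto simp: sgn_if split: if_splits\<close>)
  then show "(L \<cdot>\<^sub>m 1\<^sub>m n - Hstar n L P Lam) *\<^sub>v (u - v) = 0\<^sub>v n"
    using P Lam u v by (simp add: minus_mult_distrib_mat_vec[of _ n n] smult_mat_mult_vec[of _ n n] Hstar_def)
qed (use P Lam in \<open>auto simp: Hstar_def\<close>)

lemma Hstar_plus_eq_uminus:
  assumes P: "P \<in> carrier_mat n n" "transpose_mat P * P = 1\<^sub>m n"
    and Lam: "Lam \<in> carrier_mat n n" "diagonal_mat Lam"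
    and u: "u \<in> carrier_vec n" and v: "v \<in> carrier_vec n"
    and orth: "\<And>k. k < n \<Longrightarrow> \<not> Lam $$ (k, k) < 0 \<Longrightarrow> col P k \<bullet> (u + v) = 0"
  shows "(L \<cdot>\<^sub>m 1\<^sub>m n + Hstar n L P Lam) *\<^sub>v u = - ((L \<cdot>\<^sub>m 1\<^sub>m n + Hstar n L P Lam) *\<^sub>v v)"
proof (rule mult_mat_vec_eq_uminus_if_sum_zero[OF _ u v])
  have "Hstar n L P Lam *\<^sub>v (u + v) = (L * -1) \<cdot>\<^sub>v (u + v)"
    by (rule Hstar_mult_vec[OF P Lam]) (use u v orth in \<open>auto simp: sgn_if split: if_splits\<close>)
  then show "(L \<cdot>\<^sub>m 1\<^sub>m n + Hstar n L P Lam) *\<^sub>v (u + v) = 0\<^sub>v n"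
    using P Lam u v
    by (simp add: add_mult_distrib_mat_vec[of _ n n] smult_mat_mult_vec[of _ n n] Hstar_def)
      (intro eq_vecI; simp)
qed (use P Lam in \<open>auto simp: Hstar_def\<close>)

lemma sum_centered_product:
  fixes l a b :: "nat \<Rightarrow> 'a :: comm_ring_1"
  assumes "(\<Sum>i=1..N. l i) = 1" "(\<Sum>i=1..N. l i * a i) = a 0" "(\<Sum>i=1..N. l i * b i) = b 0"
    and "l 0 = -1"
  shows "(\<Sum>i=0..N. l i * a i * b i) = (\<Sum>i=1..N. l i * (a i - a 0) * (b i - b 0))"
proof -
  have "(\<Sum>i=1..N. l i * (a i - a 0) * (b i - b 0))
      = (\<Sum>i=1..N. l i * a i * b i) - b 0 * (\<Sum>i=1..N. l i * a i)
        - a 0 * (\<Sum>i=1..N. l i * b i) + a 0 * b 0 * (\<Sum>i=1..N. l i)"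
    by (simp add: sum_distrib_left sum_subtractf sum.distrib algebra_simps)
  also have "\<dots> = (\<Sum>i=0..N. l i * a i * b i)"
    using assms by (simp add: sum.atLeast_Suc_atMost[of 0 N])
  finally show ?thesis by simp
qed

lemma down_closed_eq_atLeastAtMost:
  fixes A :: "nat set"
  assumes fin: "finite A" and "0 \<notin> A" and down: "\<And>i j. j \<in> A \<Longrightarrow> 1 \<le> i \<Longrightarrow> i \<le> j \<Longrightarrow> i \<in> A"
  shows "A = {1..card A}"
proof (cases "A = {}")
  case False
  have A: "A = {1..Max A}"
  proof (intro equalityI subsetI)
    fix x assume "x \<in> A"
    then show "x \<in> {1..Max A}" using fin \<open>0 \<notin> A\<close> by (cases x) auto
  qed (use down[OF Max_in[OF fin False]] in auto)
  from arg_cong[OF A, of card] have "card A = Max A" by simp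
  then show ?thesis using A by simp
qed simp

lemma up_closed_eq_atLeastAtMost:
  fixes A :: "nat set"
  assumes sub: "A \<subseteq> {1..N}" and up: "\<And>i j. i \<in> A \<Longrightarrow> i \<le> j \<Longrightarrow> j \<le> N \<Longrightarrow> j \<in> A"
  shows "A = {N + 1 - card A..N}"
proof (cases "A = {}")
  case False
  have fin: "finite A" using sub finite_subset by blast
  have A: "A = {Min A..N}"
  proof (intro equalityI subsetI)
    fix x assume "x \<in> A"
    then show "x \<in> {Min A..N}" using fin sub by auto
  qed (use up[OF Min_in[OF fin False]] in auto)
  have "Min A \<le> N" using Min_in[OF fin False] sub by auto
  with arg_cong[OF A, of card] have "N + 1 - card A = Min A" by simp
  then show ?thesis using A by simp
qed simp

lemma Iplus_eq_atLeastAtMost: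
  fixes n :: nat and l :: "nat \<Rightarrow> real"
  assumes "l 0 \<le> 0" and ord: "\<And>i j. 1 \<le> i \<Longrightarrow> i \<le> j \<Longrightarrow> j \<le> n + 1 \<Longrightarrow> l j \<le> l i"
  shows "Iplus n l = {1..card (Iplus n l)}"
proof (rule down_closed_eq_atLeastAtMost)
  fix i j assume "j \<in> Iplus n l" "1 \<le> i" "i \<le> j"
  then show "i \<in> Iplus n l" using ord[of i j] by (auto simp: Iplus_def)
qed (use assms(1) in \<open>auto simp: Iplus_def\<close>)

lemma Iminus_eq_atLeastAtMost:
  fixes n :: nat and l :: "nat \<Rightarrow> real"
  assumes ord: "\<And>i j. 1 \<le> i \<Longrightarrow> i \<le> j \<Longrightarrow> j \<le> n + 1 \<Longrightarrow> l j \<le> l i"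
  shows "Iminus n l - {0} = {n + 2 - card (Iminus n l - {0})..n + 1}"
proof -
  have "Iminus n l - {0} = {n + 1 + 1 - card (Iminus n l - {0})..n + 1}"
  proof (rule up_closed_eq_atLeastAtMost)
    fix i j assume "i \<in> Iminus n l - {0}" "i \<le> j" "j \<le> n + 1"
    then show "j \<in> Iminus n l - {0}" using ord[of i j] by (auto simp: Iminus_def)
  qed (auto simp: Iminus_def)
  then show ?thesis by simp
qed

lemma sum_Iplus_Iminus:
  fixes n :: nat and l :: "nat \<Rightarrow> real"
  assumes "l 0 \<le> 0"
  shows "(\<Sum>i=1..n+1. l i * f i) = (\<Sum>i\<in>Iplus n l. l i * f i) + (\<Sum>j\<in>Iminus n l - {0}. l j * f j)"
proof -
  have "(\<Sum>i=1..n+1. l i * f i) = (\<Sum>i\<in>Iplus n l \<union> (Iminus n l - {0}). l i * f i)"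
    by (rule sum.mono_neutral_right) (use assms in \<open>auto simp: Iplus_def Iminus_def Suc_le_eq intro!: gr0I\<close>)
  also have "\<dots> = (\<Sum>i\<in>Iplus n l. l i * f i) + (\<Sum>j\<in>Iminus n l - {0}. l j * f j)"
    by (rule sum.union_disjoint) (auto simp: Iplus_def Iminus_def)
  finally show ?thesis .
qed

lemma mu_zero: "mu n y l P Lam i 0 = l i - (\<Sum>j\<in>Iminus n l - {0}. mu n y l P Lam i j)"
proof -
  let ?M = "Mmat n y l P Lam" and ?q = "card (Iminus n l)"
  have "(\<Sum>j\<in>Iminus n l - {0}. mu n y l P Lam i j) = (\<Sum>j\<in>Iminus n l - {0}. ?M $$ (i - 1, j + ?q - (n + 3)))"
    by (rule sum.cong) (auto simp: mu_def)
  then show ?thesis by (simp add: mu_def)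
qed

lemma sum_mu_row:
  fixes n :: nat and l :: "nat \<Rightarrow> real"
  assumes "l 0 < 0"
  shows "(\<Sum>j\<in>Iminus n l. mu n y l P Lam i j) = l i"
proof -
  have "0 \<in> Iminus n l" "finite (Iminus n l)" using assms by (auto simp: Iminus_def)
  then show ?thesis by (simp add: sum.remove mu_zero)
qed

locale barycentric_coordinates =
  fixes n :: nat and y :: "nat \<Rightarrow> real vec" and l :: "nat \<Rightarrow> real"
  assumes dims: "\<And>i. i \<le> n + 1 \<Longrightarrow> y i \<in> carrier_vec n"
    and aff: "affinely_independent_pts n y"
    and bary1: "(\<Sum>i=1..n+1. l i) = 1"
    and bary2: "finsum_vec TYPE(real) n (\<lambda>i. l i \<cdot>\<^sub>v y i) {1..n+1} = y 0"
    and l0: "l 0 = -1"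
begin

definition yrel :: "nat \<Rightarrow> real vec" where
  "yrel i = y i - y 0"

lemma yrel_carrier: "i \<le> n + 1 \<Longrightarrow> yrel i \<in> carrier_vec n"
  using dims[of i] dims[of 0] by (simp add: yrel_def)

lemma yrel_0: "yrel 0 = 0\<^sub>v n"
  using dims[of 0] by (simp add: yrel_def)

lemma scalar_prod_yrel:
  assumes "i \<le> n + 1" "v \<in> carrier_vec n"
  shows "yrel i \<bullet> v = y i \<bullet> v - y 0 \<bullet> v"
  using assms dims[of i] dims[of 0] by (simp add: yrel_def minus_scalar_prod_distrib[of _ n])

lemma finsum_y_carrier:
  "J \<subseteq> {0..n+1} \<Longrightarrow> finsum_vec TYPE(real) n (\<lambda>j. c j \<cdot>\<^sub>v y j) J \<in> carrier_vec n"
  by (rule finsum_vec_closed) (use dims in auto)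

lemma scalar_prod_finsum_y:
  assumes J: "J \<subseteq> {0..n+1}" and v: "v \<in> carrier_vec n"
  shows "v \<bullet> finsum_vec TYPE(real) n (\<lambda>j. c j \<cdot>\<^sub>v y j) J
    = (\<Sum>j\<in>J. c j * (yrel j \<bullet> v)) + (\<Sum>j\<in>J. c j) * (y 0 \<bullet> v)"
proof -
  have "v \<bullet> finsum_vec TYPE(real) n (\<lambda>j. c j \<cdot>\<^sub>v y j) J = (\<Sum>j\<in>J. v \<bullet> (c j \<cdot>\<^sub>v y j))"
    by (rule scalar_prod_finsum_vec) (use J v dims finite_subset in auto)
  also have "\<dots> = (\<Sum>j\<in>J. c j * (yrel j \<bullet> v) + c j * (y 0 \<bullet> v))"
  proof (rule sum.cong)
    fix j assume "j \<in> J"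
    then have j: "j \<le> n + 1" using J by auto
    show "v \<bullet> (c j \<cdot>\<^sub>v y j) = c j * (yrel j \<bullet> v) + c j * (y 0 \<bullet> v)"
      using v dims[OF j] comm_scalar_prod[of v n "y j"]
      by (simp add: scalar_prod_yrel[OF j v] algebra_simps)
  qed simp
  also have "\<dots> = (\<Sum>j\<in>J. c j * (yrel j \<bullet> v)) + (\<Sum>j\<in>J. c j) * (y 0 \<bullet> v)"
    by (simp add: sum.distrib sum_distrib_right)
  finally show ?thesis .
qed

lemma sum_yrel_scalar_prod: "v \<in> carrier_vec n \<Longrightarrow> (\<Sum>i=1..n+1. l i * (yrel i \<bullet> v)) = 0"
  using scalar_prod_finsum_y[of "{1..n+1}" v l] bary1 bary2 dims[of 0]
  by (simp add: comm_scalar_prod[of v n])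

lemma sum_y_scalar_prod:
  assumes v: "v \<in> carrier_vec n"
  shows "(\<Sum>i=1..n+1. l i * (y i \<bullet> v)) = y 0 \<bullet> v"
proof -
  have "(\<Sum>i=1..n+1. l i * (y i \<bullet> v)) = (\<Sum>i=1..n+1. l i * (yrel i \<bullet> v) + l i * (y 0 \<bullet> v))"
    using v by (intro sum.cong) (auto simp: scalar_prod_yrel algebra_simps)
  also have "\<dots> = (\<Sum>i=1..n+1. l i * (yrel i \<bullet> v)) + (\<Sum>i=1..n+1. l i) * (y 0 \<bullet> v)"
    by (simp add: sum.distrib sum_distrib_right del: sum.cl_ivl_Suc)
  finally show ?thesis using sum_yrel_scalar_prod[OF v] bary1 by simp
qed

lemma Gmat_quadratic_form:
  assumes x: "x \<in> carrier_vec n" and v: "v \<in> carrier_vec n"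
  shows "x \<bullet> (Gmat n y l *\<^sub>v v) = (\<Sum>i=1..n+1. l i * (yrel i \<bullet> x) * (yrel i \<bullet> v))"
proof -
  have "x \<bullet> (Gmat n y l *\<^sub>v v)
      = (\<Sum>a<n. \<Sum>b<n. \<Sum>i=0..n+1. l i * (y i $ a * x $ a) * (y i $ b * v $ b))"
    using x v by (simp add: Gmat_def scalar_prod_def lessThan_atLeast0 sum_distrib_left
        sum_distrib_right mult_ac del: sum.cl_ivl_Suc)
  also have "\<dots> = (\<Sum>i=0..n+1. \<Sum>a<n. \<Sum>b<n. l i * (y i $ a * x $ a) * (y i $ b * v $ b))"
    by (simp only: sum.swap[of _ "{..<n}" "{0..n+1}"])
  also have "\<dots> = (\<Sum>i=0..n+1. l i * (y i \<bullet> x) * (y i \<bullet> v))"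
    using x v dims
    by (auto simp: scalar_prod_def lessThan_atLeast0 sum_distrib_left sum_distrib_right mult_ac
        intro!: sum.cong)
  also have "\<dots> = (\<Sum>i=1..n+1. l i * (y i \<bullet> x - y 0 \<bullet> x) * (y i \<bullet> v - y 0 \<bullet> v))"
    by (rule sum_centered_product) (use bary1 sum_y_scalar_prod x v l0 in auto)
  also have "\<dots> = (\<Sum>i=1..n+1. l i * (yrel i \<bullet> x) * (yrel i \<bullet> v))"
    using x v by (intro sum.cong) (auto simp: scalar_prod_yrel)
  finally show ?thesis .
qed

lemma Gmat_kernel:
  assumes v: "v \<in> carrier_vec n" and Gv: "Gmat n y l *\<^sub>v v = 0\<^sub>v n" and i: "i \<in> {1..n+1}"
  shows "l i * (yrel i \<bullet> v) = 0"
proof -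
  define c where "c i = l i * (yrel i \<bullet> v)" for i
  have sum_c: "(\<Sum>i=1..n+1. c i) = 0" using sum_yrel_scalar_prod[OF v] by (simp add: c_def)
  have "finsum_vec TYPE(real) n (\<lambda>i. c i \<cdot>\<^sub>v y i) {1..n+1} = 0\<^sub>v n"
  proof (rule eq_vecI)
    fix a assume "a < dim_vec (0\<^sub>v n :: real vec)"
    then have a: "a < n" by simp
    have "finsum_vec TYPE(real) n (\<lambda>i. c i \<cdot>\<^sub>v y i) {1..n+1} $ a
        = unit_vec n a \<bullet> finsum_vec TYPE(real) n (\<lambda>i. c i \<cdot>\<^sub>v y i) {1..n+1}"
      using a finsum_y_carrier[of "{1..n+1}" c] by simp
    also have "\<dots> = (\<Sum>i=1..n+1. l i * (yrel i \<bullet> unit_vec n a) * (yrel i \<bullet> v))"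
      using scalar_prod_finsum_y[of "{1..n+1}" "unit_vec n a" c] sum_c by (simp add: c_def mult_ac)
    also have "\<dots> = 0"
      using Gmat_quadratic_form[of "unit_vec n a" v] v Gv a by simp
    finally show "finsum_vec TYPE(real) n (\<lambda>i. c i \<cdot>\<^sub>v y i) {1..n+1} $ a = 0\<^sub>v n $ a"
      using a by simp
  qed (use finsum_y_carrier[of "{1..n+1}" c] in simp)
  then show ?thesis using aff sum_c i unfolding affinely_independent_pts_def c_def by blast
qed

end

locale barycentric_eigensplit = barycentric_coordinates +
  fixes P Lam :: "real mat"
  assumes ord: "\<And>i j. 1 \<le> i \<Longrightarrow> i \<le> j \<Longrightarrow> j \<le> n + 1 \<Longrightarrow> l j \<le> l i"
    and P: "P \<in> carrier_mat n n" "transpose_mat P * P = 1\<^sub>m n"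
    and Lam: "Lam \<in> carrier_mat n n" "diagonal_mat Lam"
    and eig: "Gmat n y l = P * Lam * transpose_mat P"
    and inv: "invertible_mat (Yminus n y l * Pminus n P Lam)"
begin

definition npos :: nat where
  "npos = card (Iplus n l)"

definition nneg :: nat where
  "nneg = card (Iminus n l - {0})"

definition neg_start :: nat where
  "neg_start = n + 2 - nneg"

definition neg_eigs :: "nat list" where
  "neg_eigs = filter (\<lambda>k. Lam $$ (k, k) < 0) [0..<n]"

abbreviation "Pm \<equiv> Pminus n P Lam"
abbreviation "B \<equiv> Yminus n y l * Pm"
abbreviation "X \<equiv> diag_lplus n l * Yplus n y l * Pm"
abbreviation "M \<equiv> Mmat n y l P Lam"

lemma Iplus_eq: "Iplus n l = {1..npos}"
  using Iplus_eq_atLeastAtMost[where n = n and l = l] l0 ord by (simp add: npos_def)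

lemma Iminus_eq: "Iminus n l - {0} = {neg_start..n+1}"
  using Iminus_eq_atLeastAtMost[where n = n and l = l] ord by (simp add: nneg_def neg_start_def)

lemma zero_in_Iminus: "0 \<in> Iminus n l"
  using l0 by (simp add: Iminus_def)

lemma finite_Iminus: "finite (Iminus n l)"
  by (simp add: Iminus_def)

lemma card_Iminus: "card (Iminus n l) = nneg + 1"
  using card_Suc_Diff1[OF finite_Iminus zero_in_Iminus] by (simp add: nneg_def)

lemma npos_less_neg_start: "npos < neg_start" and neg_start_add_nneg: "neg_start + nneg = n + 2"
proof -
  have "npos + nneg = card (Iplus n l \<union> (Iminus n l - {0}))"
    by (subst card_Un_disjoint) (auto simp: npos_def nneg_def Iplus_def Iminus_def)
  also have "\<dots> \<le> card {1..n+1}"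
    using l0 by (intro card_mono) (auto simp: Iplus_def Iminus_def Suc_le_eq intro!: gr0I)
  finally show "npos < neg_start" "neg_start + nneg = n + 2" by (auto simp: neg_start_def)
qed

lemma sum_Iminus_reindex: "(\<Sum>j\<in>Iminus n l - {0}. f j) = (\<Sum>r<nneg. f (r + neg_start))"
  unfolding Iminus_eq
  by (rule sum.reindex_bij_witness[of _ "\<lambda>r. r + neg_start" "\<lambda>j. j - neg_start"])
    (use neg_start_add_nneg in auto)

lemma sum_Iplus_reindex: "(\<Sum>i\<in>Iplus n l. f i) = (\<Sum>a<npos. f (a + 1))"
  unfolding Iplus_eq by (rule sum.reindex_bij_witness[of _ "\<lambda>a. a + 1" "\<lambda>i. i - 1"]) auto

lemma Ymat_row: "r \<le> n \<Longrightarrow> row (Ymat n y) r = yrel (r + 1)"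
  using yrel_carrier[of "r + 1"] by (simp add: Ymat_def yrel_def nth_map_upt del: upt_Suc)

lemma Yplus:
  "Yplus n y l \<in> carrier_mat npos n" "a < npos \<Longrightarrow> row (Yplus n y l) a = yrel (a + 1)"
proof -
  have Yp: "Yplus n y l = mat_of_rows n (map (row (Ymat n y)) [0..<npos])"
    by (simp add: Yplus_def npos_def)
  show "Yplus n y l \<in> carrier_mat npos n"
    unfolding Yp using mat_of_rows_carrier(1)[of n "map (row (Ymat n y)) [0..<npos]"] by simp
  assume a: "a < npos"
  then have "a \<le> n" using npos_less_neg_start neg_start_add_nneg by linarith
  then show "row (Yplus n y l) a = yrel (a + 1)"
    unfolding Yp using a yrel_carrier[of "a + 1"] by (simp add: Ymat_row)
qed

lemma Yminus:
  "Yminus n y l \<in> carrier_mat nneg n"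
  "r < nneg \<Longrightarrow> row (Yminus n y l) r = yrel (r + neg_start)"
proof -
  have "n + 2 - card (Iminus n l) = neg_start - 1" "n + 1 - (neg_start - 1) = nneg"
    using card_Iminus npos_less_neg_start neg_start_add_nneg by auto
  then have Ym: "Yminus n y l = mat_of_rows n (map (row (Ymat n y)) [neg_start - 1..<n + 1])"
    by (simp add: Yminus_def)
  show "Yminus n y l \<in> carrier_mat nneg n"
    unfolding Ym using mat_of_rows_carrier(1)[of n "map (row (Ymat n y)) [neg_start - 1..<n + 1]"]
      \<open>n + 1 - (neg_start - 1) = nneg\<close> by (simp del: upt_Suc)
  assume r: "r < nneg"
  then have "neg_start - 1 + r \<le> n" "neg_start - 1 + r + 1 = r + neg_start"
    using npos_less_neg_start neg_start_add_nneg by linarith+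
  then have nth: "map (row (Ymat n y)) [neg_start - 1..<n + 1] ! r = yrel (r + neg_start)"
    using r \<open>n + 1 - (neg_start - 1) = nneg\<close> by (simp add: Ymat_row add.commute del: upt_Suc)
  have len: "r < length (map (row (Ymat n y)) [neg_start - 1..<n + 1])"
    using r \<open>n + 1 - (neg_start - 1) = nneg\<close> by (simp del: upt_Suc)
  have "r + neg_start \<le> n + 1" using \<open>neg_start - 1 + r \<le> n\<close> by linarith
  then show "row (Yminus n y l) r = yrel (r + neg_start)"
    unfolding Ym using mat_of_rows_row[OF len, unfolded nth] yrel_carrier by blast
qed

lemma Pminus:
  "Pm \<in> carrier_mat n (length neg_eigs)"
  "c < length neg_eigs \<Longrightarrow> neg_eigs ! c < n \<and> Lam $$ (neg_eigs ! c, neg_eigs ! c) < 0"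
  "c < length neg_eigs \<Longrightarrow> col Pm c = col P (neg_eigs ! c)"
proof -
  have Pm: "Pm = mat_of_cols n (map (col P) neg_eigs)"
    by (simp add: Pminus_def neg_eigs_def)
  show "Pm \<in> carrier_mat n (length neg_eigs)"
    unfolding Pm using mat_of_cols_carrier(1)[of n "map (col P) neg_eigs"] by simp
  show neg: "c < length neg_eigs \<Longrightarrow> neg_eigs ! c < n \<and> Lam $$ (neg_eigs ! c, neg_eigs ! c) < 0"
    using nth_mem[of c neg_eigs] by (auto simp: neg_eigs_def simp del: nth_mem)
  show "c < length neg_eigs \<Longrightarrow> col Pm c = col P (neg_eigs ! c)"
    unfolding Pm using neg P by auto
qed

lemma col_Pminus_carrier: "col Pm c \<in> carrier_vec n"
  using carrier_matD(1)[OF Pminus(1)] by (simp add: carrier_vecI)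

lemma length_neg_eigs: "length neg_eigs = nneg"
proof -
  have "square_mat B" using inv by (simp add: invertible_mat_def)
  then show ?thesis using carrier_matD[OF Yminus(1)] carrier_matD[OF Pminus(1)] by simp
qed

lemma B_carrier: "B \<in> carrier_mat nneg nneg"
  using Yminus(1) Pminus(1) length_neg_eigs by auto

lemma B_index: "r < nneg \<Longrightarrow> c < nneg \<Longrightarrow> B $$ (r, c) = yrel (r + neg_start) \<bullet> col Pm c"
  using Yminus Pminus(1) length_neg_eigs by simp

lemma diag_lplus:
  "diag_lplus n l \<in> carrier_mat npos npos" "diagonal_mat (diag_lplus n l)"
  "a < npos \<Longrightarrow> diag_lplus n l $$ (a, a) = l (a + 1)"
  by (auto simp: diag_lplus_def npos_def diagonal_mat_def Let_def)

lemma X_carrier: "X \<in> carrier_mat npos nneg"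
  using diag_lplus(1) Yplus(1) Pminus(1) length_neg_eigs by auto

lemma X_index:
  assumes a: "a < npos" and c: "c < nneg"
  shows "X $$ (a, c) = l (a + 1) * (yrel (a + 1) \<bullet> col Pm c)"
proof -
  let ?D = "diag_lplus n l" and ?YP = "Yplus n y l * Pm"
  have YP: "?YP \<in> carrier_mat npos nneg" using Yplus(1) Pminus(1) length_neg_eigs by auto
  have "X $$ (a, c) = (?D * ?YP) $$ (a, c)"
    using diag_lplus(1) Yplus(1) Pminus(1) by (simp add: assoc_mult_mat[of _ npos npos _ n])
  also have "\<dots> = (?D *\<^sub>v col ?YP c) $ a"
    using carrier_matD[OF diag_lplus(1)] carrier_matD[OF YP] a c by simp
  also have "\<dots> = l (a + 1) * ?YP $$ (a, c)"
    using diagonal_mat_mult_vec_index[OF diag_lplus(1,2) _ a, of "col ?YP c"] diag_lplus(3)[OF a]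
      carrier_matD[OF YP] a c by (simp add: carrier_vecI)
  also have "\<dots> = l (a + 1) * (yrel (a + 1) \<bullet> col Pm c)"
    using Yplus Pminus(1) length_neg_eigs a c by simp
  finally show ?thesis .
qed

lemma inverse_B:
  "B * the (mat_inverse B) = 1\<^sub>m nneg" "the (mat_inverse B) * B = 1\<^sub>m nneg"
  "the (mat_inverse B) \<in> carrier_mat nneg nneg"
  using invertible_mat_the_mat_inverse[OF B_carrier inv] by auto

lemma M_eq: "M = X * the (mat_inverse B)"
  by (simp add: Mmat_def)

lemma M_carrier: "M \<in> carrier_mat npos nneg"
  using X_carrier inverse_B(3) by (simp add: M_eq)

lemma M_mult_B: "M * B = X"
  using X_carrier B_carrier inverse_B
  by (simp add: M_eq assoc_mult_mat[of X npos nneg _ nneg B nneg] right_mult_one_mat[OF X_carrier])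

lemma mu_neg:
  assumes "j \<in> Iminus n l - {0}"
  shows "mu n y l P Lam i j = M $$ (i - 1, j - neg_start)"
proof -
  have "j + card (Iminus n l) - (n + 3) = j - neg_start"
    using card_Iminus neg_start_add_nneg by simp
  then show ?thesis using assms by (simp add: mu_def)
qed

lemma sum_mu_row_scalar_prod_Pminus:
  assumes i: "i \<in> Iplus n l" and c: "c < nneg"
  shows "(\<Sum>j\<in>Iminus n l. mu n y l P Lam i j * (yrel j \<bullet> col Pm c)) = l i * (yrel i \<bullet> col Pm c)"
proof -
  have i': "i - 1 < npos" "i - 1 + 1 = i" using i by (auto simp: Iplus_eq)
  have "(\<Sum>j\<in>Iminus n l. mu n y l P Lam i j * (yrel j \<bullet> col Pm c))
      = (\<Sum>j\<in>Iminus n l - {0}. mu n y l P Lam i j * (yrel j \<bullet> col Pm c))"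
    using col_Pminus_carrier by (simp add: sum.remove[OF finite_Iminus zero_in_Iminus] yrel_0)
  also have "\<dots> = (\<Sum>r<nneg. M $$ (i - 1, r) * B $$ (r, c))"
    unfolding sum_Iminus_reindex using c Iminus_eq neg_start_add_nneg
    by (intro sum.cong) (auto simp: mu_neg B_index)
  also have "\<dots> = X $$ (i - 1, c)"
    using index_mult_mat_sum[OF M_carrier B_carrier i'(1) c] by (simp add: M_mult_B)
  also have "\<dots> = l i * (yrel i \<bullet> col Pm c)"
    using X_index[OF i'(1) c] i'(2) by simp
  finally show ?thesis .
qed

lemma sum_mu_column_weighted:
  assumes comb: "\<And>c. c < nneg \<Longrightarrow> (\<Sum>i=1..n+1. l i * ((yrel i \<bullet> col Pm c) * g i)) = 0"
    and g0: "(\<Sum>i=1..n+1. l i * g i) = g 0"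
    and j: "j \<in> Iminus n l"
  shows "(\<Sum>i\<in>Iplus n l. mu n y l P Lam i j * g i) = - l j * g j"
proof -
  have neg: "(\<Sum>i\<in>Iplus n l. mu n y l P Lam i k * g i) = - l k * g k"
    if k: "k \<in> Iminus n l - {0}" for k
  proof -
    let ?h = "\<lambda>r. l (r + neg_start) * g (r + neg_start)"
    have comb': "(\<Sum>a<npos. X $$ (a, c) * g (a + 1)) = - (\<Sum>r<nneg. B $$ (r, c) * ?h r)"
      if c: "c < nneg" for c
    proof -
      have "(\<Sum>a<npos. X $$ (a, c) * g (a + 1)) = (\<Sum>i\<in>Iplus n l. l i * ((yrel i \<bullet> col Pm c) * g i))"
        unfolding sum_Iplus_reindex using c by (intro sum.cong) (auto simp: X_index)
      also have "\<dots> = - (\<Sum>j\<in>Iminus n l - {0}. l j * ((yrel j \<bullet> col Pm c) * g j))"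
        using comb[OF c] sum_Iplus_Iminus[where f = "\<lambda>i. (yrel i \<bullet> col Pm c) * g i"] l0
        by (simp add: eq_neg_iff_add_eq_0 del: sum.cl_ivl_Suc)
      also have "\<dots> = - (\<Sum>r<nneg. B $$ (r, c) * ?h r)"
        unfolding sum_Iminus_reindex using c by (auto simp: B_index mult_ac intro!: sum.cong)
      finally show ?thesis .
    qed
    have "k \<in> {neg_start..n+1}" using k unfolding Iminus_eq .
    then have r: "k - neg_start < nneg" "k - neg_start + neg_start = k"
      using neg_start_add_nneg by auto
    have "(\<Sum>a<npos. M $$ (a, k - neg_start) * g (a + 1)) = - ?h (k - neg_start)"
      unfolding M_eq
      by (rule sum_mult_mat_right_inverse[OF X_carrier B_carrier inverse_B(3,1) comb' r(1)])
    then show ?thesis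
      unfolding sum_Iplus_reindex using k r(2) by (simp add: mu_neg)
  qed
  show ?thesis
  proof (cases "j = 0")
    case True
    have "(\<Sum>i\<in>Iplus n l. mu n y l P Lam i 0 * g i)
        = (\<Sum>i\<in>Iplus n l. l i * g i) - (\<Sum>k\<in>Iminus n l - {0}. \<Sum>i\<in>Iplus n l. mu n y l P Lam i k * g i)"
      by (simp add: mu_zero left_diff_distrib sum_subtractf sum_distrib_right sum.swap[of _ "Iplus n l"])
    also have "\<dots> = (\<Sum>i\<in>Iplus n l. l i * g i) + (\<Sum>k\<in>Iminus n l - {0}. l k * g k)"
      using sum.cong[OF refl neg, of "Iminus n l - {0}"] by (simp add: sum_negf)
    also have "\<dots> = g 0"
      using sum_Iplus_Iminus[where n = n and l = l and f = g] l0 g0 by simp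
    finally show ?thesis using True l0 by simp
  qed (use neg j in auto)
qed

lemma Gmat_mult_col_P: "k < n \<Longrightarrow> Gmat n y l *\<^sub>v col P k = Lam $$ (k, k) \<cdot>\<^sub>v col P k"
  using spectral_mult_col[OF P Lam] eig by simp

lemma yrel_orthogonal_zero_eigenvector:
  assumes k: "k < n" "Lam $$ (k, k) = 0" and j: "j \<in> Iplus n l \<union> Iminus n l"
  shows "yrel j \<bullet> col P k = 0"
proof (cases "j = 0")
  case True
  then show ?thesis using P k by (simp add: yrel_0)
next
  case False
  then have "j \<in> {1..n+1}" "l j \<noteq> 0" using j by (auto simp: Iplus_def Iminus_def)
  moreover have "l j * (yrel j \<bullet> col P k) = 0"
    by (rule Gmat_kernel) (use Gmat_mult_col_P k P \<open>j \<in> {1..n+1}\<close> in auto)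
  ultimately show ?thesis by simp
qed

lemma negative_positive_eigenvector_orthogonal:
  assumes k: "k < n" "0 < Lam $$ (k, k)" and c: "c < nneg"
  shows "(\<Sum>i=1..n+1. l i * ((yrel i \<bullet> col Pm c) * (yrel i \<bullet> col P k))) = 0"
proof -
  have c': "c < length neg_eigs" using c length_neg_eigs by simp
  have "neg_eigs ! c \<noteq> k" using Pminus(2)[OF c'] k by auto
  then have "col Pm c \<bullet> (Gmat n y l *\<^sub>v col P k) = 0"
    using Pminus(2,3)[OF c'] Gmat_mult_col_P[OF k(1)] k P
    by (simp add: orthogonal_mat_col_scalar_prod[OF P])
  then show ?thesis
    using Gmat_quadratic_form[OF col_Pminus_carrier, of "col P k" c] k P by (simp add: mult.assoc)
qed

lemma negative_eigenvector_col_Pminus: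
  assumes "k < n" "Lam $$ (k, k) < 0"
  obtains c where "c < nneg" "col P k = col Pm c"
proof -
  have "k \<in> set neg_eigs" using assms by (simp add: neg_eigs_def)
  then obtain c where "c < length neg_eigs" "neg_eigs ! c = k" by (auto simp: in_set_conv_nth)
  then show ?thesis using that Pminus(3) length_neg_eigs by auto
qed

lemma sum_mu_row_eq: "(\<Sum>j\<in>Iminus n l. mu n y l P Lam i j) = l i"
  using sum_mu_row[where n = n and l = l] l0 by simp

lemma sum_mu_column_eq: "j \<in> Iminus n l \<Longrightarrow> (\<Sum>i\<in>Iplus n l. mu n y l P Lam i j) = - l j"
  using sum_mu_column_weighted[of "\<lambda>_. 1" j] sum_yrel_scalar_prod[OF col_Pminus_carrier] bary1 by simp

lemma Hstar_minus_finsum_mu_row: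
  assumes i: "i \<in> Iplus n l"
  shows "(L \<cdot>\<^sub>m 1\<^sub>m n - Hstar n L P Lam) *\<^sub>v
      finsum_vec TYPE(real) n (\<lambda>j. mu n y l P Lam i j \<cdot>\<^sub>v y j) (Iminus n l)
    = (L \<cdot>\<^sub>m 1\<^sub>m n - Hstar n L P Lam) *\<^sub>v (l i \<cdot>\<^sub>v y i)"
proof -
  let ?F = "finsum_vec TYPE(real) n (\<lambda>j. mu n y l P Lam i j \<cdot>\<^sub>v y j) (Iminus n l)"
  have i1: "i \<le> n + 1" and J: "Iminus n l \<subseteq> {0..n+1}" using i by (auto simp: Iplus_def Iminus_def)
  have F: "?F \<in> carrier_vec n" and yi: "l i \<cdot>\<^sub>v y i \<in> carrier_vec n"
    using finsum_y_carrier[OF J] dims[OF i1] by auto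
  have dot: "col P k \<bullet> (?F - l i \<cdot>\<^sub>v y i)
      = (\<Sum>j\<in>Iminus n l. mu n y l P Lam i j * (yrel j \<bullet> col P k)) - l i * (yrel i \<bullet> col P k)"
    if k: "k < n" for k
    using P k F yi dims[OF i1] scalar_prod_finsum_y[OF J, of "col P k"] sum_mu_row_eq
    by (simp add: scalar_prod_minus_distrib[of _ n] scalar_prod_yrel[OF i1] comm_scalar_prod[of _ n "y i"]
        algebra_simps)
  show ?thesis
  proof (rule Hstar_minus_eq[OF P Lam F yi])
    fix k assume k: "k < n" "\<not> 0 < Lam $$ (k, k)"
    show "col P k \<bullet> (?F - l i \<cdot>\<^sub>v y i) = 0"
    proof (cases "Lam $$ (k, k) = 0")
      case True
      then show ?thesis using dot[OF k(1)] yrel_orthogonal_zero_eigenvector[OF k(1) True] i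
        by (simp cong: sum.cong)
    next
      case False
      with k obtain c where c: "c < nneg" "col P k = col Pm c"
        by (auto elim: negative_eigenvector_col_Pminus)
      then show ?thesis using dot[OF k(1)] sum_mu_row_scalar_prod_Pminus[OF i c(1)] by simp
    qed
  qed
qed

lemma Hstar_plus_finsum_mu_column:
  assumes j: "j \<in> Iminus n l"
  shows "(L \<cdot>\<^sub>m 1\<^sub>m n + Hstar n L P Lam) *\<^sub>v
      finsum_vec TYPE(real) n (\<lambda>i. mu n y l P Lam i j \<cdot>\<^sub>v y i) (Iplus n l)
    = - ((L \<cdot>\<^sub>m 1\<^sub>m n + Hstar n L P Lam) *\<^sub>v (l j \<cdot>\<^sub>v y j))"
proof -
  let ?F = "finsum_vec TYPE(real) n (\<lambda>i. mu n y l P Lam i j \<cdot>\<^sub>v y i) (Iplus n l)"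
  have j1: "j \<le> n + 1" and J: "Iplus n l \<subseteq> {0..n+1}" using j by (auto simp: Iplus_def Iminus_def)
  have F: "?F \<in> carrier_vec n" and yj: "l j \<cdot>\<^sub>v y j \<in> carrier_vec n"
    using finsum_y_carrier[OF J] dims[OF j1] by auto
  have dot: "col P k \<bullet> (?F + l j \<cdot>\<^sub>v y j)
      = (\<Sum>i\<in>Iplus n l. mu n y l P Lam i j * (yrel i \<bullet> col P k)) + l j * (yrel j \<bullet> col P k)"
    if k: "k < n" for k
    using P k F yj dims[OF j1] scalar_prod_finsum_y[OF J, of "col P k"] sum_mu_column_eq[OF j]
    by (simp add: scalar_prod_add_distrib[of _ n] scalar_prod_yrel[OF j1] comm_scalar_prod[of _ n "y j"]
        algebra_simps)
  show ?thesis
  proof (rule Hstar_plus_eq_uminus[OF P Lam F yj])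
    fix k assume k: "k < n" "\<not> Lam $$ (k, k) < 0"
    have v: "col P k \<in> carrier_vec n" using P k by simp
    show "col P k \<bullet> (?F + l j \<cdot>\<^sub>v y j) = 0"
    proof (cases "Lam $$ (k, k) = 0")
      case True
      then show ?thesis using dot[OF k(1)] yrel_orthogonal_zero_eigenvector[OF k(1) True] j
        by (simp cong: sum.cong)
    next
      case False
      then have pos: "0 < Lam $$ (k, k)" using k(2) by simp
      have g0: "(\<Sum>i=1..n+1. l i * (yrel i \<bullet> col P k)) = yrel 0 \<bullet> col P k"
        using sum_yrel_scalar_prod[OF v] v by (simp add: yrel_0)
      have "(\<Sum>i\<in>Iplus n l. mu n y l P Lam i j * (yrel i \<bullet> col P k)) = - l j * (yrel j \<bullet> col P k)"
        by (rule sum_mu_column_weighted[OF _ g0 j],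
            rule negative_positive_eigenvector_orthogonal[OF k(1) pos])
      then show ?thesis using dot[OF k(1)] by simp
    qed
  qed
qed

end


theorem lemma4p3:
  fixes n :: nat and y :: "nat \<Rightarrow> real vec" and l :: "nat \<Rightarrow> real"
    and L :: real and P Lam :: "real mat"
  assumes dims: "\<And>i. i \<le> n + 1 \<Longrightarrow> y i \<in> carrier_vec n"
    and aff: "affinely_independent_pts n y"
    and Lpos: "L > 0"
    and bary1: "(\<Sum>i=1..n+1. l i) = 1"
    and bary2: "finsum_vec TYPE(real) n (\<lambda>i. l i \<cdot>\<^sub>v y i) {1..n+1} = y 0"
    and l0: "l 0 = -1"
    and ord: "\<And>i j. 1 \<le> i \<Longrightarrow> i \<le> j \<Longrightarrow> j \<le> n + 1 \<Longrightarrow> l j \<le> l i"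
    and P: "P \<in> carrier_mat n n" "transpose_mat P * P = 1\<^sub>m n"
    and Lam: "Lam \<in> carrier_mat n n" "diagonal_mat Lam"
    and eig: "Gmat n y l = P * Lam * transpose_mat P"
    and inv: "invertible_mat (Yminus n y l * Pminus n P Lam)"
  shows "(\<forall>i\<in>Iplus n l. (\<Sum>j\<in>Iminus n l. mu n y l P Lam i j) = l i)
    \<and> (\<forall>j\<in>Iminus n l. (\<Sum>i\<in>Iplus n l. mu n y l P Lam i j) = - l j)
    \<and> (\<forall>i\<in>Iplus n l.
         (L \<cdot>\<^sub>m 1\<^sub>m n - Hstar n L P Lam) *\<^sub>v
            finsum_vec TYPE(real) n (\<lambda>j. mu n y l P Lam i j \<cdot>\<^sub>v y j) (Iminus n l)
       = (L \<cdot>\<^sub>m 1\<^sub>m n - Hstar n L P Lam) *\<^sub>v (l i \<cdot>\<^sub>v y i))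
    \<and> (\<forall>j\<in>Iminus n l.
         (L \<cdot>\<^sub>m 1\<^sub>m n + Hstar n L P Lam) *\<^sub>v
            finsum_vec TYPE(real) n (\<lambda>i. mu n y l P Lam i j \<cdot>\<^sub>v y i) (Iplus n l)
       = - ((L \<cdot>\<^sub>m 1\<^sub>m n + Hstar n L P Lam) *\<^sub>v (l j \<cdot>\<^sub>v y j)))"
proof -
  interpret barycentric_eigensplit n y l P Lam
    using dims aff bary1 bary2 l0 ord P Lam eig inv by unfold_locales
  show ?thesis
    using sum_mu_row_eq sum_mu_column_eq Hstar_minus_finsum_mu_row Hstar_plus_finsum_mu_column
    by blast
qed

end
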